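(* Let $n,k$ be integers with $2\le k<n$. Then $$\overline{\mathrm{dist}}_F(\mathcal{S}^{n,k},\mathcal{S}^n_+)\le \frac{n-k}{n+k-2}.$$
   Context: $\mathcal{S}^n_+$ denotes the cone of $n\times n$ real symmetric positive semidefinite (PSD) matrices. For integers $2\le k\le n$, the $k$-PSD closure $\mathcal{S}^{n,k}$ is the set of all $n\times n$ real symmetric matrices all of whose $k\times k$ principal submatrices are PSD. For a matrix $M$, $\mathrm{dist}_F(M,\mathcal{S}^n_+)=\inf_{N\in\mathcal{S}^n_+}\|M-N\|_F$, where $\|\cdot\|_F$ is the Frobenius norm. For a set $\mathcal{K}$ of $n\times n$ matrices, $\overline{\mathrm{dist}}_F(\mathcal{K},\mathcal{S}^n_+)=\sup_{M\in\mathcal{K},\ \|M\|_F=1}\mathrm{dist}_F(M,\mathcal{S}^n_+)$. *)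

theory Defs
  imports "HOL-Analysis.Analysis"
begin

text \<open>n x n real matrices are represented as real^'n^'n with n = CARD('n).\<close>

definition symmetric_mat :: "real^'n^'n \<Rightarrow> bool" where
  "symmetric_mat M \<longleftrightarrow> transpose M = M"

definition psd_cone :: "(real^'n^'n) set" where
  "psd_cone = {M. symmetric_mat M \<and> (\<forall>x. 0 \<le> x \<bullet> (M *v x))}"

definition principal_psd :: "'n set \<Rightarrow> real^'n^'n \<Rightarrow> bool" where
  "principal_psd I M \<longleftrightarrow> (\<forall>x::'n \<Rightarrow> real. 0 \<le> (\<Sum>i\<in>I. \<Sum>j\<in>I. x i * M $ i $ j * x j))"

definition k_psd_closure :: "nat \<Rightarrow> (real^'n^'n) set" where
  "k_psd_closure k = {M. symmetric_mat M \<and> (\<forall>I. card I = k \<longrightarrow> principal_psd I M)}"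

definition frob_norm :: "real^'n^'n \<Rightarrow> real" where
  "frob_norm M = sqrt (\<Sum>i\<in>UNIV. \<Sum>j\<in>UNIV. (M $ i $ j)^2)"

definition dist_F_psd :: "real^'n^'n \<Rightarrow> real" where
  "dist_F_psd M = (INF N\<in>psd_cone. frob_norm (M - N))"

definition sup_dist_F_psd :: "(real^'n^'n) set \<Rightarrow> real" where
  "sup_dist_F_psd K = (SUP M\<in>{M\<in>K. frob_norm M = 1}. dist_F_psd M)"

end

theory Submission
  imports Defs
begin

text \<open>Summing the quadratic forms of all k \<times> k principal submatrices of M \<in> S^{n,k} counts every
  diagonal term C(n-1,k-1) times and every off-diagonal term C(n-2,k-2) times, so
  (n-1) D(x) + (k-1) O(x) \<ge> 0, where D and O are the diagonal and off-diagonal parts of the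
  quadratic form of M. Scaling the diagonal of M by 1+t and its off-diagonal part by 1-t, with
  (1+t):(1-t) = (n-1):(k-1), i.e. t = (n-k)/(n+k-2), therefore gives a PSD matrix N, and
  M - N is M with every entry scaled by \<plusminus>t, so ||M - N||_F = t ||M||_F.\<close>

lemma card_supersets_of_card:
  fixes A :: "'a::finite set"
  assumes "card A \<le> k"
  shows "card {I. card I = k \<and> A \<subseteq> I} = (CARD('a) - card A) choose (k - card A)"
proof -
  have "bij_betw (\<lambda>B. B \<union> A) {B. B \<subseteq> - A \<and> card B = k - card A} {I. card I = k \<and> A \<subseteq> I}"
  proof (rule bij_betw_byWitness[where f' = "\<lambda>I. I - A"])
    show "(\<lambda>B. B \<union> A) ` {B. B \<subseteq> - A \<and> card B = k - card A} \<subseteq> {I. card I = k \<and> A \<subseteq> I}"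
      using assms by (auto simp: card_Un_disjoint disjoint_eq_subset_Compl)
    show "(\<lambda>I. I - A) ` {I. card I = k \<and> A \<subseteq> I} \<subseteq> {B. B \<subseteq> - A \<and> card B = k - card A}"
      by (auto simp: card_Diff_subset)
  qed auto
  then have "card {I. card I = k \<and> A \<subseteq> I} = card {B. B \<subseteq> - A \<and> card B = k - card A}"
    by (simp add: bij_betw_same_card)
  also have "\<dots> = card (- A) choose (k - card A)"
    by (rule n_subsets) simp
  also have "card (- A) = CARD('a) - card A"
    by (simp add: Compl_eq_Diff_UNIV card_Diff_subset)
  finally show ?thesis .
qed

lemma card_subsets_containing_pair:
  fixes i j :: "'a::finite"
  assumes "2 \<le> k"
  shows "card {I. card I = k \<and> i \<in> I \<and> j \<in> I}
           = (if i = j then (CARD('a) - 1) choose (k - 1) else (CARD('a) - 2) choose (k - 2))"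
proof -
  have "{I. card I = k \<and> i \<in> I \<and> j \<in> I} = {I. card I = k \<and> {i, j} \<subseteq> I}"
    by auto
  then show ?thesis
    using card_supersets_of_card[of "{i, j}" k] assms by (cases "i = j") (auto simp: numeral_2_eq_2)
qed

lemma sum_principal_quadratic_forms:
  fixes g :: "'a::finite \<Rightarrow> 'a \<Rightarrow> real"
  shows "(\<Sum>I | card I = k. \<Sum>i\<in>I. \<Sum>j\<in>I. g i j)
       = (\<Sum>i\<in>UNIV. \<Sum>j\<in>UNIV. g i j * real (card {I. card I = k \<and> i \<in> I \<and> j \<in> I}))"
proof -
  let ?S = "{I::'a set. card I = k}"
  have "(\<Sum>i\<in>I. \<Sum>j\<in>I. g i j) = (\<Sum>i\<in>UNIV. \<Sum>j\<in>UNIV. if i \<in> I \<and> j \<in> I then g i j else 0)"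
    for I :: "'a set"
  proof -
    have "(\<Sum>i\<in>UNIV. \<Sum>j\<in>UNIV. if i \<in> I \<and> j \<in> I then g i j else 0)
        = (\<Sum>i\<in>UNIV. if i \<in> I then \<Sum>j\<in>I. g i j else 0)"
      by (intro sum.cong refl) (simp add: sum.inter_restrict[symmetric])
    also have "\<dots> = (\<Sum>i\<in>I. \<Sum>j\<in>I. g i j)"
      by (simp add: sum.inter_restrict[symmetric])
    finally show ?thesis ..
  qed
  then have "(\<Sum>I\<in>?S. \<Sum>i\<in>I. \<Sum>j\<in>I. g i j)
      = (\<Sum>I\<in>?S. \<Sum>i\<in>UNIV. \<Sum>j\<in>UNIV. if i \<in> I \<and> j \<in> I then g i j else 0)"
    by (rule sum.cong[OF refl])
  also have "\<dots> = (\<Sum>i\<in>UNIV. \<Sum>j\<in>UNIV. \<Sum>I\<in>?S. if i \<in> I \<and> j \<in> I then g i j else 0)"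
    by (subst sum.swap, rule sum.cong[OF refl], rule sum.swap)
  also have "\<dots> = (\<Sum>i\<in>UNIV. \<Sum>j\<in>UNIV. g i j * real (card {I. card I = k \<and> i \<in> I \<and> j \<in> I}))"
    by (intro sum.cong refl) (simp add: sum.inter_filter[symmetric] conj_assoc)
  finally show ?thesis .
qed

lemma binomial_absorption_shifted:
  assumes "2 \<le> k"
  shows "(k - 1) * ((n - 1) choose (k - 1)) = (n - 1) * ((n - 2) choose (k - 2))"
  using binomial_absorption[of "k - 2" "n - 1"] assms
  by (simp add: Suc_diff_Suc numeral_2_eq_2)

definition diag_form :: "real^'n^'n \<Rightarrow> ('n \<Rightarrow> real) \<Rightarrow> real" where
  "diag_form M x = (\<Sum>i\<in>UNIV. x i * M $ i $ i * x i)"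

definition offdiag_form :: "real^'n^'n \<Rightarrow> ('n \<Rightarrow> real) \<Rightarrow> real" where
  "offdiag_form M x = (\<Sum>i\<in>UNIV. \<Sum>j\<in>UNIV. if i = j then 0 else x i * M $ i $ j * x j)"

lemma quadratic_form_split_diag_offdiag:
  "(\<Sum>i\<in>UNIV. \<Sum>j\<in>UNIV. (if i = j then a else b) * (x i * M $ i $ j * x j))
     = a * diag_form M x + b * offdiag_form M x"
proof -
  have "(\<Sum>j\<in>UNIV. (if i = j then a else b) * (x i * M $ i $ j * x j))
      = a * (x i * M $ i $ i * x i) + b * (\<Sum>j\<in>UNIV. if i = j then 0 else x i * M $ i $ j * x j)"
    for i
  proof -
    have "(\<Sum>j\<in>UNIV. (if i = j then a else b) * (x i * M $ i $ j * x j))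
        = (\<Sum>j\<in>UNIV. a * (if i = j then x i * M $ i $ j * x j else 0)
                     + b * (if i = j then 0 else x i * M $ i $ j * x j))"
      by (rule sum.cong) auto
    then show ?thesis
      by (simp add: sum.distrib flip: sum_distrib_left)
  qed
  then show ?thesis
    unfolding diag_form_def offdiag_form_def by (simp add: sum.distrib sum_distrib_left)
qed

lemma sum_principal_quadratic_forms_eq:
  fixes M :: "real^'n^'n"
  assumes "2 \<le> k"
  shows "(\<Sum>I | card I = k. \<Sum>i\<in>I. \<Sum>j\<in>I. x i * M $ i $ j * x j)
       = real ((CARD('n) - 1) choose (k - 1)) * diag_form M x
         + real ((CARD('n) - 2) choose (k - 2)) * offdiag_form M x"
  unfolding sum_principal_quadratic_forms quadratic_form_split_diag_offdiag[symmetric]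
  by (intro sum.cong refl) (simp add: card_subsets_containing_pair[OF assms])

lemma nonneg_combination_rescale:
  fixes a b p q D E :: real
  assumes "0 \<le> a * D + b * E" and "p * a = q * b" and "0 < b" and "0 \<le> p"
  shows "0 \<le> q * D + p * E"
proof -
  have "b * (q * D + p * E) = p * (a * D + b * E)"
    using assms(2) by algebra
  then have "0 \<le> b * (q * D + p * E)"
    using assms(1,4) by simp
  then show ?thesis
    using assms(3) by (simp add: zero_le_mult_iff)
qed

lemma k_psd_closure_averaged_form_nonneg:
  fixes M :: "real^'n^'n"
  assumes M: "M \<in> k_psd_closure k" and k: "2 \<le> k" "k \<le> CARD('n)"
  shows "0 \<le> real (CARD('n) - 1) * diag_form M x + real (k - 1) * offdiag_form M x"
proof (rule nonneg_combination_rescale)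
  have principal: "0 \<le> (\<Sum>i\<in>I. \<Sum>j\<in>I. x i * M $ i $ j * x j)" if "card I = k" for I
    using M that by (simp add: k_psd_closure_def principal_psd_def)
  have "0 \<le> (\<Sum>I | card I = k. \<Sum>i\<in>I. \<Sum>j\<in>I. x i * M $ i $ j * x j)"
    by (rule sum_nonneg) (simp add: principal)
  then show "0 \<le> real ((CARD('n) - 1) choose (k - 1)) * diag_form M x
                 + real ((CARD('n) - 2) choose (k - 2)) * offdiag_form M x"
    using k by (simp only: sum_principal_quadratic_forms_eq)
  show "real (k - 1) * real ((CARD('n) - 1) choose (k - 1))
      = real (CARD('n) - 1) * real ((CARD('n) - 2) choose (k - 2))"
    using binomial_absorption_shifted[OF k(1), of "CARD('n)"] by (metis of_nat_mult)
  show "0 < real ((CARD('n) - 2) choose (k - 2))"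
    using k by simp
qed simp

definition scale_diag_offdiag :: "real \<Rightarrow> real \<Rightarrow> real^'n^'n \<Rightarrow> real^'n^'n" where
  "scale_diag_offdiag a b M = (\<chi> i j. if i = j then a * M $ i $ j else b * M $ i $ j)"

lemma symmetric_scale_diag_offdiag:
  assumes "symmetric_mat M"
  shows "symmetric_mat (scale_diag_offdiag a b M)"
proof -
  have "M $ j $ i = M $ i $ j" for i j
    using assms by (simp add: symmetric_mat_def vec_eq_iff transpose_def)
  then show ?thesis
    by (simp add: symmetric_mat_def scale_diag_offdiag_def transpose_def vec_eq_iff)
qed

lemma quadratic_form_scale_diag_offdiag:
  "x \<bullet> (scale_diag_offdiag a b M *v x)
     = a * diag_form M (\<lambda>i. x $ i) + b * offdiag_form M (\<lambda>i. x $ i)"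
proof -
  have "x \<bullet> (scale_diag_offdiag a b M *v x)
      = (\<Sum>i\<in>UNIV. \<Sum>j\<in>UNIV. (if i = j then a else b) * (x $ i * M $ i $ j * x $ j))"
    unfolding inner_vec_def matrix_vector_mult_def scale_diag_offdiag_def
    by (simp add: sum_distrib_left) (intro sum.cong refl, simp add: algebra_simps)
  then show ?thesis
    by (simp add: quadratic_form_split_diag_offdiag)
qed

lemma scale_diag_offdiag_in_psd_cone:
  fixes M :: "real^'n^'n"
  assumes M: "M \<in> k_psd_closure k" and k: "2 \<le> k" "k \<le> CARD('n)" and "0 \<le> c"
  shows "scale_diag_offdiag (c * real (CARD('n) - 1)) (c * real (k - 1)) M \<in> psd_cone"
proof -
  have "symmetric_mat M"
    using M by (simp add: k_psd_closure_def)
  moreover have "0 \<le> c * (real (CARD('n) - 1) * diag_form M x + real (k - 1) * offdiag_form M x)"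
    for x
    using k_psd_closure_averaged_form_nonneg[OF M k] \<open>0 \<le> c\<close> by simp
  ultimately show ?thesis
    by (simp add: psd_cone_def symmetric_scale_diag_offdiag quadratic_form_scale_diag_offdiag
        algebra_simps)
qed

lemma diff_scale_diag_offdiag:
  "M - scale_diag_offdiag a b M = scale_diag_offdiag (1 - a) (1 - b) M"
  by (simp add: scale_diag_offdiag_def vec_eq_iff algebra_simps)

lemma frob_norm_scale_diag_offdiag:
  assumes "\<bar>a\<bar> = \<bar>b\<bar>"
  shows "frob_norm (scale_diag_offdiag a b M) = \<bar>a\<bar> * frob_norm M"
proof -
  have "b\<^sup>2 = a\<^sup>2"
    using assms by (metis power2_abs)
  then have "(scale_diag_offdiag a b M $ i $ j)\<^sup>2 = a\<^sup>2 * (M $ i $ j)\<^sup>2" for i j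
    by (simp add: scale_diag_offdiag_def power_mult_distrib)
  then show ?thesis
    by (simp add: frob_norm_def real_sqrt_mult flip: sum_distrib_left)
qed

lemma frob_norm_nonneg: "0 \<le> frob_norm M"
  by (simp add: frob_norm_def sum_nonneg)

lemma dist_F_psd_le_frob_norm_diff:
  assumes "N \<in> psd_cone"
  shows "dist_F_psd M \<le> frob_norm (M - N)"
  unfolding dist_F_psd_def
  by (rule cINF_lower[OF _ assms]) (auto intro: bdd_belowI[where m = 0] simp: frob_norm_nonneg)

lemma dist_F_psd_k_psd_closure_le:
  fixes M :: "real^'n^'n"
  assumes M: "M \<in> k_psd_closure k" and k: "2 \<le> k" "k \<le> CARD('n)"
  shows "dist_F_psd M \<le> (real CARD('n) - real k) / (real CARD('n) + real k - 2) * frob_norm M"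
proof -
  define t where "t = (real CARD('n) - real k) / (real CARD('n) + real k - 2)"
  define c where "c = 2 / (real CARD('n) + real k - 2)"
  have den: "real CARD('n) + real k - 2 > 0"
    using k by linarith
  have "0 \<le> c" "0 \<le> t"
    using den k by (simp_all add: t_def c_def)
  have "1 - c * real (CARD('n) - 1) = - t" "1 - c * real (k - 1) = t"
    using den k by (simp_all add: t_def c_def field_simps of_nat_diff)
  have "dist_F_psd M \<le> frob_norm (M - scale_diag_offdiag (c * real (CARD('n) - 1)) (c * real (k - 1)) M)"
    by (rule dist_F_psd_le_frob_norm_diff[OF scale_diag_offdiag_in_psd_cone[OF M k \<open>0 \<le> c\<close>]])
  also have "\<dots> = frob_norm (scale_diag_offdiag (- t) t M)"
    by (simp only: diff_scale_diag_offdiag \<open>1 - c * real (CARD('n) - 1) = - t\<close> \<open>1 - c * real (k - 1) = t\<close>)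
  also have "\<dots> = t * frob_norm M"
    using \<open>0 \<le> t\<close> by (simp add: frob_norm_scale_diag_offdiag)
  finally show ?thesis
    by (simp add: t_def)
qed

lemma frob_norm_mat: "frob_norm (mat c :: real^'n^'n) = \<bar>c\<bar> * sqrt CARD('n)"
  by (simp add: frob_norm_def mat_def if_distrib[of power2] sum.delta real_sqrt_mult
      cong: if_cong)

lemma mat_in_k_psd_closure:
  assumes "0 \<le> c"
  shows "(mat c :: real^'n^'n) \<in> k_psd_closure k"
proof -
  have "0 \<le> (\<Sum>i\<in>I. \<Sum>j\<in>I. x i * mat c $ i $ j * x j)" for x and I :: "'n set"
  proof -
    have "(\<Sum>j\<in>I. x i * mat c $ i $ j * x j) = (\<Sum>j\<in>I. if i = j then c * (x i)\<^sup>2 else 0)" for i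
      by (rule sum.cong) (auto simp: mat_def power2_eq_square)
    then have "(\<Sum>i\<in>I. \<Sum>j\<in>I. x i * mat c $ i $ j * x j) = (\<Sum>i\<in>I. c * (x i)\<^sup>2)"
      by simp
    then show ?thesis
      using assms by (simp add: sum_nonneg)
  qed
  then show ?thesis
    by (simp add: k_psd_closure_def principal_psd_def symmetric_mat_def transpose_mat)
qed

lemma k_psd_closure_unit_frob_norm_nonempty:
  "{M \<in> (k_psd_closure k :: (real^'n^'n) set). frob_norm M = 1} \<noteq> {}"
proof -
  have "mat (1 / sqrt CARD('n)) \<in> (k_psd_closure k :: (real^'n^'n) set)"
    by (rule mat_in_k_psd_closure) simp
  moreover have "frob_norm (mat (1 / sqrt CARD('n)) :: real^'n^'n) = 1"
    unfolding frob_norm_mat by simp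
  ultimately show ?thesis
    by blast
qed

theorem theorem1:
  fixes k :: nat
  assumes "2 \<le> k" and "k < CARD('n::finite)"
  shows "sup_dist_F_psd (k_psd_closure k :: (real^'n^'n) set)
           \<le> (real CARD('n) - real k) / (real CARD('n) + real k - 2)"
  unfolding sup_dist_F_psd_def
proof (rule cSUP_least[OF k_psd_closure_unit_frob_norm_nonempty])
  fix M :: "real^'n^'n"
  assume "M \<in> {M \<in> k_psd_closure k. frob_norm M = 1}"
  then show "dist_F_psd M \<le> (real CARD('n) - real k) / (real CARD('n) + real k - 2)"
    using dist_F_psd_k_psd_closure_le[of M k] assms by simp
qed

end
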